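(* Let $G=G_{\mathbf E}$ be a multi-GGS group which is not the constant GGS group. Then every element of $N(B)$ fixes the vertex $0$, and $$N(B)|_0\subseteq N(B),\qquad C(B)|_0\subseteq C(B),$$ where $N(B),C(B)$ are the normaliser and centraliser of $B$ in $\mathrm{Aut}(X^* )$ and $S|_0=\{g|_0\mid g\in S\}$.
   Context: Let $p$ be an odd prime and $X=\{0,1,\dots,p-1\}$, identified with $\mathbb F_p$. $X^*$ is the $p$-regular rooted tree of finite words over $X$; $\mathrm{Aut}(X^* )$ acts on the right. Sections $g|_v$ are defined by $(vw)^g=v^g\,w^{g|_v}$. $\mathrm{Stab}(1)$ is the stabiliser of all one-letter words and $\psi_1\colon\mathrm{Stab}(1)\to\mathrm{Aut}(X^* )^p$, $g\mapsto(g|_0,\dots,g|_{p-1})$, is an isomorphism. Let $a$ be the rooted automorphism acting as $\sigma=(0\,1\,\cdots\,p-1)$ on the first letter and trivially on the remaining letters. Let $\mathbf E\le\mathbb F_p^{p-1}$ be a subspace of dimension $r\ge1$; $E$ is the $r\times(p-1)$ matrix whose rows form a fixed basis of $\mathbf E$, with columns $\mathbf e_1,\dots,\mathbf e_{p-1}$. For $\mathbf n\in\mathbb F_p^r$, $b^{\mathbf n}\in\mathrm{Stab}(1)$ is the unique automorphism with $\psi_1(b^{\mathbf n})=(b^{\mathbf n},a^{\mathbf n\cdot\mathbf e_1},\dots,a^{\mathbf n\cdot\mathbf e_{p-1}})$; $B=\{b^{\mathbf n}\mid\mathbf n\in\mathbb F_p^r\}$. $G_{\mathbf E}$ is generated by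 $a$ and $B$; it is the constant GGS group if $\mathbf E=\{(\lambda,\dots,\lambda)\mid\lambda\in\mathbb F_p\}$. *)

theory Defs
  imports Main "HOL-Computational_Algebra.Primes"
begin

text \<open>Words over X = {0,...,p-1}: lists of naturals below p.  An automorphism of
the p-regular rooted tree X* is represented by a function on nat lists which is a
length- and prefix-preserving bijection of the words over X and the identity on all
other lists (so that equality of automorphisms is equality of functions).
The action is on the right: w^g = g w, and the product gh (first g, then h)
is the function h o g.\<close>

definition words :: "nat \<Rightarrow> nat list set" where
  "words p = {w. set w \<subseteq> {..<p}}"

definition is_aut :: "nat \<Rightarrow> (nat list \<Rightarrow> nat list) \<Rightarrow> bool" where
  "is_aut p g \<longleftrightarrow> bij_betw g (words p) (words p)
     \<and> (\<forall>w\<in>words p. length (g w) = length w)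
     \<and> (\<forall>v\<in>words p. \<forall>w\<in>words p. take (length v) (g (v @ w)) = g v)
     \<and> (\<forall>w. w \<notin> words p \<longrightarrow> g w = w)"

text \<open>Section g|_v, defined by (vw)^g = v^g w^(g|_v).\<close>
definition sect :: "nat \<Rightarrow> (nat list \<Rightarrow> nat list) \<Rightarrow> nat list \<Rightarrow> (nat list \<Rightarrow> nat list)" where
  "sect p g v = (\<lambda>w. if w \<in> words p then drop (length v) (g (v @ w)) else w)"

fun rotfun :: "nat \<Rightarrow> nat \<Rightarrow> nat list \<Rightarrow> nat list" where
  "rotfun p k [] = []"
| "rotfun p k (x # w) = ((x + k) mod p) # w"

text \<open>The automorphism b with psi_1(b) = (b, a^(c 1), ..., a^(c (p-1))).\<close>
fun bfun :: "nat \<Rightarrow> (nat \<Rightarrow> nat) \<Rightarrow> nat list \<Rightarrow> nat list" where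
  "bfun p c [] = []"
| "bfun p c (x # w) = (if x = 0 then 0 # bfun p c w else x # rotfun p (c x) w)"

definition bgen :: "nat \<Rightarrow> (nat \<Rightarrow> nat) \<Rightarrow> nat list \<Rightarrow> nat list" where
  "bgen p c = (\<lambda>w. if w \<in> words p then bfun p c w else w)"

text \<open>E is the r x (p-1) matrix over F_p (entries E i x, i < r, 1 <= x <= p-1),
represented by natural numbers below p. n . e_x = (sum_i n_i E i x) mod p.\<close>
definition dotcol :: "nat \<Rightarrow> nat \<Rightarrow> (nat \<Rightarrow> nat \<Rightarrow> nat) \<Rightarrow> (nat \<Rightarrow> nat) \<Rightarrow> nat \<Rightarrow> nat" where
  "dotcol p r E n x = (\<Sum>i<r. n i * E i x) mod p"

definition Fpvecs :: "nat \<Rightarrow> nat \<Rightarrow> (nat \<Rightarrow> nat) set" where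
  "Fpvecs p r = {n. (\<forall>i<r. n i < p) \<and> (\<forall>i\<ge>r. n i = 0)}"

definition Bset :: "nat \<Rightarrow> nat \<Rightarrow> (nat \<Rightarrow> nat \<Rightarrow> nat) \<Rightarrow> (nat list \<Rightarrow> nat list) set" where
  "Bset p r E = {bgen p (dotcol p r E n) | n. n \<in> Fpvecs p r}"

definition rowspace :: "nat \<Rightarrow> nat \<Rightarrow> (nat \<Rightarrow> nat \<Rightarrow> nat) \<Rightarrow> (nat \<Rightarrow> nat) set" where
  "rowspace p r E = {(\<lambda>x. if x \<in> {1..p-1} then dotcol p r E n x else 0) | n. n \<in> Fpvecs p r}"

definition constvecs :: "nat \<Rightarrow> (nat \<Rightarrow> nat) set" where
  "constvecs p = {(\<lambda>x. if x \<in> {1..p-1} then l else 0) | l. l < p}"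

definition rows_indep :: "nat \<Rightarrow> nat \<Rightarrow> (nat \<Rightarrow> nat \<Rightarrow> nat) \<Rightarrow> bool" where
  "rows_indep p r E \<longleftrightarrow> (\<forall>n\<in>Fpvecs p r. (\<forall>x\<in>{1..p-1}. dotcol p r E n x = 0) \<longrightarrow> (\<forall>i<r. n i = 0))"

text \<open>Normaliser and centraliser of a set S in Aut(X*).  g^{-1} S g = S is expressed
without inverses: for each s there is s' with s g = g s', and conversely.
In function form the product s g is g o s.\<close>
definition normaliser :: "nat \<Rightarrow> (nat list \<Rightarrow> nat list) set \<Rightarrow> (nat list \<Rightarrow> nat list) set" where
  "normaliser p S = {g. is_aut p g \<and> (\<forall>s\<in>S. \<exists>s'\<in>S. g \<circ> s = s' \<circ> g)
                                    \<and> (\<forall>s'\<in>S. \<exists>s\<in>S. g \<circ> s = s' \<circ> g)}"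

definition centraliser :: "nat \<Rightarrow> (nat list \<Rightarrow> nat list) set \<Rightarrow> (nat list \<Rightarrow> nat list) set" where
  "centraliser p S = {g. is_aut p g \<and> (\<forall>s\<in>S. g \<circ> s = s \<circ> g)}"

end

(*
  Sections at a vertex fixed by an automorphism compose like the automorphisms themselves,
  and every b in B fixes 0 with b|_0 = b.  Hence once g normalises (centralises) B and
  fixes 0, taking sections at 0 of g b = b' g gives g|_0 b = b' g|_0.

  That g fixes 0 comes from a generator b = b^n with c = n.e_x nonzero: b maps 0 x 0 to
  0 x c, so g maps these two words to distinct words u, u' with a common prefix of length 2,
  and u' = b'(u) for some b' in B.  If u began with a nonzero letter, b' would alter only
  its second letter, forcing u' = u.
*)
theory Submission
  imports Defs
begin

lemma words_Nil [simp]: "[] \<in> words p"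
  by (simp add: words_def)

lemma words_Cons [simp]: "x # w \<in> words p \<longleftrightarrow> x < p \<and> w \<in> words p"
  by (auto simp: words_def)

lemma words_append [simp]: "v @ w \<in> words p \<longleftrightarrow> v \<in> words p \<and> w \<in> words p"
  by (auto simp: words_def)

lemma words_drop: "w \<in> words p \<Longrightarrow> drop n w \<in> words p"
  by (auto simp: words_def dest: in_set_dropD)

lemma is_aut_words: "is_aut p g \<Longrightarrow> w \<in> words p \<Longrightarrow> g w \<in> words p"
  unfolding is_aut_def bij_betw_def by blast

lemma is_aut_image: "is_aut p g \<Longrightarrow> g ` words p = words p"
  unfolding is_aut_def bij_betw_def by blast

lemma is_aut_inj_on: "is_aut p g \<Longrightarrow> inj_on g (words p)"
  unfolding is_aut_def bij_betw_def by blast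

lemma is_aut_length: "is_aut p g \<Longrightarrow> w \<in> words p \<Longrightarrow> length (g w) = length w"
  unfolding is_aut_def by blast

lemma is_aut_take:
  "is_aut p g \<Longrightarrow> v \<in> words p \<Longrightarrow> w \<in> words p \<Longrightarrow> take (length v) (g (v @ w)) = g v"
  unfolding is_aut_def by blast

lemma sect_outside: "w \<notin> words p \<Longrightarrow> sect p g v w = w"
  by (simp add: sect_def)

lemma sect_words: "is_aut p g \<Longrightarrow> v \<in> words p \<Longrightarrow> w \<in> words p \<Longrightarrow> sect p g v w \<in> words p"
  by (simp add: sect_def words_drop is_aut_words)

lemma is_aut_append:
  assumes "is_aut p g" "v \<in> words p" "w \<in> words p"
  shows "g (v @ w) = g v @ sect p g v w"
proof -
  have "g (v @ w) = take (length v) (g (v @ w)) @ drop (length v) (g (v @ w))"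
    by simp
  then show ?thesis
    using assms by (simp add: is_aut_take sect_def)
qed

lemma inj_on_sect:
  assumes g: "is_aut p g" and v: "v \<in> words p"
  shows "inj_on (sect p g v) (words p)"
proof (rule inj_onI)
  fix w w' assume w: "w \<in> words p" "w' \<in> words p" and "sect p g v w = sect p g v w'"
  then have "g (v @ w) = g (v @ w')"
    using is_aut_append[OF g v] by simp
  then show "w = w'"
    using inj_onD[OF is_aut_inj_on[OF g]] w v by fastforce
qed

lemma image_sect:
  assumes g: "is_aut p g" and v: "v \<in> words p"
  shows "sect p g v ` words p = words p"
proof (intro equalityI subsetI)
  fix w' assume w': "w' \<in> words p"
  have "g v @ w' \<in> g ` words p"
    using is_aut_image[OF g] is_aut_words[OF g v] w' by simp
  then obtain u where u: "u \<in> words p" "g u = g v @ w'"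
    by (metis imageE)
  have "length v \<le> length u"
    using is_aut_length[OF g u(1)] is_aut_length[OF g v] u(2) by simp
  then obtain u\<^sub>1 u\<^sub>2 where u\<^sub>1\<^sub>2: "u = u\<^sub>1 @ u\<^sub>2" "length u\<^sub>1 = length v"
    by (metis append_take_drop_id length_take min_absorb2)
  have words: "u\<^sub>1 \<in> words p" "u\<^sub>2 \<in> words p"
    using u(1) unfolding u\<^sub>1\<^sub>2(1) by simp_all
  have "g u\<^sub>1 = g v"
    using is_aut_take[OF g words] u(2) u\<^sub>1\<^sub>2 is_aut_length[OF g v] by simp
  then have "u\<^sub>1 = v"
    using inj_onD[OF is_aut_inj_on[OF g]] words(1) v by blast
  then have "sect p g v u\<^sub>2 = w'"
    using is_aut_append[OF g v words(2)] u(2) u\<^sub>1\<^sub>2(1) by simp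
  then show "w' \<in> sect p g v ` words p"
    using words(2) by blast
qed (use sect_words[OF g v] in blast)

lemma is_aut_sect:
  assumes g: "is_aut p g" and v: "v \<in> words p"
  shows "is_aut p (sect p g v)"
proof -
  have split: "g (v @ w) = g v @ sect p g v w" if "w \<in> words p" for w
    using is_aut_append[OF g v that] .
  have "length (sect p g v w) = length w" if "w \<in> words p" for w
  proof -
    have "length (g (v @ w)) = length v + length w"
      using is_aut_length[OF g] that v by simp
    then show ?thesis
      using split[OF that] is_aut_length[OF g v] by simp
  qed
  moreover have "take (length w) (sect p g v (w @ w')) = sect p g v w"
    if "w \<in> words p" "w' \<in> words p" for w w'
  proof -
    have "take (length (v @ w)) (g (v @ w @ w')) = g (v @ w)"
      using is_aut_take[OF g, of "v @ w" w'] that v by simp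
    then show ?thesis
      using split that is_aut_length[OF g v] by simp
  qed
  ultimately show ?thesis
    using inj_on_sect[OF g v] image_sect[OF g v]
    unfolding is_aut_def bij_betw_def by (simp add: sect_outside)
qed

lemma sect_comp:
  assumes g: "is_aut p g" and h: "is_aut p h" and v: "v \<in> words p"
  shows "sect p (g \<circ> h) v = sect p g (h v) \<circ> sect p h v"
proof
  fix w
  show "sect p (g \<circ> h) v w = (sect p g (h v) \<circ> sect p h v) w"
  proof (cases "w \<in> words p")
    case True
    have "g (h (v @ w)) = g (h v) @ sect p g (h v) (sect p h v w)"
      using is_aut_append[OF h v True] is_aut_append[OF g] is_aut_words[OF h v]
        sect_words[OF h v True] by simp
    then show ?thesis
      using True is_aut_length[OF g] is_aut_length[OF h v] is_aut_words[OF h v]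
      by (simp add: sect_def)
  qed (simp add: sect_outside)
qed

lemma sect_conj_fixed:
  assumes g: "is_aut p g" and s: "is_aut p s" and s': "is_aut p s'" and v: "v \<in> words p"
    and "g v = v" "s v = v" and conj: "g \<circ> s = s' \<circ> g"
  shows "sect p g v \<circ> sect p s v = sect p s' v \<circ> sect p g v"
proof -
  have "sect p (g \<circ> s) v = sect p (s' \<circ> g) v"
    using conj by simp
  then show ?thesis
    using sect_comp[OF g s v] sect_comp[OF s' g v] assms(5,6) by simp
qed

lemma sect_mem_normaliser:
  assumes S: "\<forall>s\<in>S. is_aut p s \<and> s v = v \<and> sect p s v = s"
    and v: "v \<in> words p" and g: "g \<in> normaliser p S" and "g v = v"
  shows "sect p g v \<in> normaliser p S"
proof -
  have gaut: "is_aut p g" using g by (simp add: normaliser_def)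
  have conj: "sect p g v \<circ> s = s' \<circ> sect p g v"
    if "s \<in> S" "s' \<in> S" "g \<circ> s = s' \<circ> g" for s s'
    using sect_conj_fixed[OF gaut _ _ v \<open>g v = v\<close> _ that(3)] S that(1,2) by auto
  show ?thesis
    using g conj is_aut_sect[OF gaut v] unfolding normaliser_def by blast
qed

lemma sect_mem_centraliser:
  assumes S: "\<forall>s\<in>S. is_aut p s \<and> s v = v \<and> sect p s v = s"
    and v: "v \<in> words p" and g: "g \<in> centraliser p S" and "g v = v"
  shows "sect p g v \<in> centraliser p S"
proof -
  have gaut: "is_aut p g" using g by (simp add: centraliser_def)
  have "sect p g v \<circ> s = s \<circ> sect p g v" if "s \<in> S" for s
  proof -
    have s: "is_aut p s" "s v = v" "sect p s v = s" and "g \<circ> s = s \<circ> g"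
      using S g that by (auto simp: centraliser_def)
    then show ?thesis
      using sect_conj_fixed[OF gaut s(1) s(1) v \<open>g v = v\<close> s(2)] by simp
  qed
  then show ?thesis
    using is_aut_sect[OF gaut v] unfolding centraliser_def by blast
qed

lemma length_rotfun [simp]: "length (rotfun p k w) = length w"
  by (cases w) auto

lemma rotfun_words: "0 < p \<Longrightarrow> w \<in> words p \<Longrightarrow> rotfun p k w \<in> words p"
  by (cases w) auto

lemma rotfun_append: "v \<noteq> [] \<Longrightarrow> rotfun p k (v @ w) = rotfun p k v @ w"
  by (cases v) auto

lemma rotfun_rotfun:
  assumes "(k + k') mod p = 0" "w \<in> words p"
  shows "rotfun p k (rotfun p k' w) = w"
proof (cases w)
  case (Cons x u)
  have "((x + k') mod p + k) mod p = (x + (k + k')) mod p"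
    by (simp add: mod_add_left_eq add.assoc add.commute[of k'])
  also have "\<dots> = (x + (k + k') mod p) mod p"
    by (simp only: mod_add_right_eq)
  also have "\<dots> = x"
    using assms Cons by simp
  finally show ?thesis using Cons by simp
qed simp

lemma length_bfun [simp]: "length (bfun p c w) = length w"
  by (induction w) auto

lemma bfun_words: "0 < p \<Longrightarrow> w \<in> words p \<Longrightarrow> bfun p c w \<in> words p"
  by (induction w) (auto simp: rotfun_words)

lemma take_bfun_append: "take (length v) (bfun p c (v @ w)) = bfun p c v"
proof (induction v)
  case (Cons x v)
  then show ?case
    by (cases "v = []") (auto simp: rotfun_append)
qed simp

lemma bfun_bfun:
  "(\<And>x. (c x + c' x) mod p = 0) \<Longrightarrow> w \<in> words p \<Longrightarrow> bfun p c (bfun p c' w) = w"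
  by (induction w) (auto simp: rotfun_rotfun)

lemma is_aut_bgen:
  assumes "0 < p"
  shows "is_aut p (bgen p c)"
proof -
  define c' where "c' x = p - c x mod p" for x
  have inverse: "(c x + c' x) mod p = 0" "(c' x + c x) mod p = 0" for x
  proof -
    have "(c x + c' x) mod p = (c x mod p + (p - c x mod p)) mod p"
      by (simp add: c'_def mod_add_left_eq)
    also have "\<dots> = 0"
      using assms by simp
    finally show "(c x + c' x) mod p = 0" "(c' x + c x) mod p = 0"
      by (simp_all add: add.commute)
  qed
  have "bij_betw (bgen p c) (words p) (words p)"
    by (rule bij_betw_byWitness[where f' = "bgen p c'"])
      (use assms in \<open>auto simp: bgen_def bfun_bfun inverse bfun_words\<close>)
  moreover have "length (bgen p c w) = length w" for w
    by (simp add: bgen_def)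
  moreover have "take (length v) (bgen p c (v @ w)) = bgen p c v"
    if "v \<in> words p" "w \<in> words p" for v w
    using that by (simp add: bgen_def take_bfun_append)
  moreover have "bgen p c w = w" if "w \<notin> words p" for w
    using that by (simp add: bgen_def)
  ultimately show ?thesis
    unfolding is_aut_def by blast
qed

lemma Bset_self_similar:
  assumes "0 < p" "s \<in> Bset p r E"
  shows "is_aut p s \<and> s [0] = [0] \<and> sect p s [0] = s"
proof -
  obtain c where s: "s = bgen p c"
    using assms(2) by (auto simp: Bset_def)
  have "sect p s [0] = s"
    using assms(1) by (auto simp: s sect_def bgen_def)
  then show ?thesis
    using assms(1) is_aut_bgen by (simp add: s bgen_def)
qed

lemma conj_bgen_imp_fixes_0:
  assumes g: "is_aut p g" and conj: "g \<circ> bgen p c = bgen p c' \<circ> g"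
    and x: "0 < x" "x < p" and cx: "0 < c x" "c x < p"
  shows "g [0] = [0]"
proof -
  have W: "[0, x, 0] \<in> words p" "[0, x, c x] \<in> words p"
    using x cx by auto
  let ?u = "g [0, x, 0]" and ?u' = "g [0, x, c x]"
  have "bgen p c [0, x, 0] = [0, x, c x]"
    using W x cx by (simp add: bgen_def)
  then have u': "?u' = bgen p c' ?u"
    using conj by (metis comp_apply)
  have "?u \<noteq> ?u'"
    using inj_onD[OF is_aut_inj_on[OF g] _ W] cx by auto
  moreover have "take 2 ?u = take 2 ?u'"
    using is_aut_take[OF g, of "[0, x]" "[0]"] is_aut_take[OF g, of "[0, x]" "[c x]"] x cx
    by (simp add: numeral_2_eq_2)
  moreover obtain y z w where u: "?u = [y, z, w]"
    using is_aut_length[OF g W(1)] by (auto simp: numeral_3_eq_3 length_Suc_conv)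
  moreover have "?u \<in> words p"
    using is_aut_words[OF g W(1)] .
  \<comment> \<open>A generator of B changes only the second letter of a word whose first letter is
    nonzero, so it cannot map ?u to ?u' unless their common first letter is 0.\<close>
  ultimately have "y = 0"
    using u' by (auto simp: bgen_def numeral_2_eq_2 split: if_splits)
  then show ?thesis
    using is_aut_take[OF g, of "[0]" "[x, 0]"] W(1) u by simp
qed

lemma Bset_obtains_active:
  assumes "1 < p" "1 \<le> r" "rows_indep p r E"
  obtains c x where "bgen p c \<in> Bset p r E" "0 < x" "x < p" "0 < c x" "c x < p"
proof -
  define e\<^sub>0 :: "nat \<Rightarrow> nat" where "e\<^sub>0 i = (if i = 0 then 1 else 0)" for i
  have e\<^sub>0: "e\<^sub>0 \<in> Fpvecs p r"
    using assms(1,2) by (auto simp: Fpvecs_def e\<^sub>0_def)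
  moreover have "\<not> (\<forall>i<r. e\<^sub>0 i = 0)"
    using assms(2) by (auto simp: e\<^sub>0_def)
  ultimately obtain x where "x \<in> {1..p-1}" "dotcol p r E e\<^sub>0 x \<noteq> 0"
    using assms(3) unfolding rows_indep_def by blast
  moreover have "bgen p (dotcol p r E e\<^sub>0) \<in> Bset p r E"
    using e\<^sub>0 by (auto simp: Bset_def)
  ultimately show ?thesis
    using that[of "dotcol p r E e\<^sub>0" x] assms(1) by (auto simp: dotcol_def)
qed

lemma normaliser_Bset_fixes_0:
  assumes "prime p" "1 \<le> r" "rows_indep p r E" "g \<in> normaliser p (Bset p r E)"
  shows "g [0] = [0]"
proof -
  obtain c x where c: "bgen p c \<in> Bset p r E" and "0 < x" "x < p" "0 < c x" "c x < p"
    using Bset_obtains_active assms(1-3) prime_gt_1_nat by blast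
  moreover obtain c' where "g \<circ> bgen p c = bgen p c' \<circ> g"
    using assms(4) c unfolding normaliser_def Bset_def by blast
  ultimately show ?thesis
    using conj_bgen_imp_fixes_0 assms(4) unfolding normaliser_def by blast
qed

theorem mainTheorem6:
  fixes p r :: nat and E :: "nat \<Rightarrow> nat \<Rightarrow> nat"
  assumes "prime p" and "odd p" and "r \<ge> 1"
    and "\<forall>i<r. \<forall>x\<in>{1..p-1}. E i x < p"
    and "rows_indep p r E"
    and "rowspace p r E \<noteq> constvecs p"
  shows "(\<forall>g\<in>normaliser p (Bset p r E). g [0] = [0])
       \<and> (\<forall>g\<in>normaliser p (Bset p r E). sect p g [0] \<in> normaliser p (Bset p r E))
       \<and> (\<forall>g\<in>centraliser p (Bset p r E). sect p g [0] \<in> centraliser p (Bset p r E))"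
proof -
  have "0 < p"
    using assms(1) prime_gt_0_nat by blast
  then have B: "\<forall>s\<in>Bset p r E. is_aut p s \<and> s [0] = [0] \<and> sect p s [0] = s"
    and v: "[0] \<in> words p"
    using Bset_self_similar by auto
  have fix0: "g [0] = [0]" if "g \<in> normaliser p (Bset p r E)" for g
    using normaliser_Bset_fixes_0 assms(1,3,5) that .
  have "centraliser p (Bset p r E) \<subseteq> normaliser p (Bset p r E)"
    unfolding centraliser_def normaliser_def by blast
  then show ?thesis
    using fix0 sect_mem_normaliser[OF B v] sect_mem_centraliser[OF B v] by blast
qed

end
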